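(* Let $p\in(0,1)$, let $X,\gamma$ satisfy the standing assumptions in the context, and let $0\le x_0<\mathbb E[\gamma X]$. Let $q=\inf\{\mathrm{VaR}_p(g(X)):g\in\mathcal G_{\rm ns}\}$ and assume $q>0$ and $\mathbb P\big((X-q)\gamma\le\mathrm{VaR}_p((X-q)\gamma)\big)=p$. Then the problem of minimizing $\mathrm{VaR}_p(g(X))$ over $g\in\mathcal G_{\rm ns}$ admits a $\mathbb P$-a.s. unique solution, given by $g_X(X)=X\mathds 1_{\{(X-q)\gamma>c\}}+(X\wedge q)\mathds 1_{\{(X-q)\gamma\le c\}}$, where $c=\mathrm{VaR}_p((X-q)\gamma)$.
   Context: $(\Omega,\mathcal F,\mathbb P)$ is atomless. $\mathrm{VaR}_p(Y)=\inf\{x:\mathbb P(Y\le x)\ge p\}$. Standing assumptions: $X\ge0$ is a random variable whose distribution has a positive density on its support; $\gamma:\mathbb R\to\mathbb R$ is continuous and strictly positive; $\gamma$ also denotes $\gamma(X)$; $\mathbb E[\gamma]=1$, $\mathbb E[\gamma X]<\infty$. With $\mathcal G_1$ the measurable functions $\mathbb R\to\mathbb R$, $\mathcal G_{\rm ns}=\{g\in\mathcal G_1:\mathbb E[\gamma g(X)]\ge x_0,\ 0\le g(X)\le X\}$. *)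

theory Defs
  imports "HOL-Probability.Probability"
begin

definition atomless :: "'a measure \<Rightarrow> bool" where
  "atomless M \<longleftrightarrow> (\<forall>A\<in>sets M. measure M A > 0 \<longrightarrow>
     (\<exists>B\<in>sets M. B \<subseteq> A \<and> 0 < measure M B \<and> measure M B < measure M A))"

definition VaR :: "'a measure \<Rightarrow> real \<Rightarrow> ('a \<Rightarrow> real) \<Rightarrow> real" where
  "VaR M p Y = Inf {x::real. measure M {\<omega>\<in>space M. Y \<omega> \<le> x} \<ge> p}"

definition dist_support :: "'a measure \<Rightarrow> ('a \<Rightarrow> real) \<Rightarrow> real set" where
  "dist_support M X = {x. \<forall>e>0. measure M {\<omega>\<in>space M. X \<omega> \<in> ball x e} > 0}"

definition pos_density_on_support :: "'a measure \<Rightarrow> ('a \<Rightarrow> real) \<Rightarrow> bool" where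
  "pos_density_on_support M X \<longleftrightarrow>
     (\<exists>f. distributed M lborel X f \<and> (\<forall>x\<in>dist_support M X. f x > 0))"

definition G_ns :: "'a measure \<Rightarrow> ('a \<Rightarrow> real) \<Rightarrow> (real \<Rightarrow> real) \<Rightarrow> real \<Rightarrow> (real \<Rightarrow> real) set" where
  "G_ns M X \<gamma> x0 = {g. g \<in> borel_measurable borel \<and>
      (AE \<omega> in M. 0 \<le> g (X \<omega>) \<and> g (X \<omega>) \<le> X \<omega>) \<and>
      (\<integral>\<omega>. \<gamma> (X \<omega>) * g (X \<omega>) \<partial>M) \<ge> x0}"

end

(*
  For a cap t, the payoff capped t keeps X where (X - q) \<gamma>(X) > c and caps it at t
  elsewhere; since the level set {(X - q) \<gamma>(X) \<le> c} has probability p, its VaR is at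
  most t. Minimality of q therefore forces price (capped q) \<le> x0, as a slightly lower
  cap would otherwise still be affordable.

  Conversely, let g be admissible and t = VaR g \<ge> q. On the event B = {g(X) \<le> t},
  which has probability at least p, g(X) \<le> X - (X - q)^+ + (t - q), so
  price g \<le> price id - E[excess 1_B] + (t - q) with excess = \<gamma>(X) (X - q)^+. By a
  Neyman-Pearson argument the sublevel set {excess \<le> c} (the level set above, once
  c \<ge> 0 is known) minimizes E[excess 1_B] among events of probability at least p, so
  price g \<le> price (capped q) + t - q, whence x0 \<le> price (capped q). So capped q is
  admissible and optimal, and for any other optimal g both bounds are equalities, which
  forces g(X) = capped q (X) almost surely.
*)
theory Submission
  imports Defs
begin

lemma (in prob_space) VaR_le_iff:
  assumes [measurable]: "Y \<in> borel_measurable M" and "0 < p" "p < 1"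
  shows "VaR M p Y \<le> x \<longleftrightarrow> p \<le> prob {\<omega>\<in>space M. Y \<omega> \<le> x}"
proof -
  interpret Y: cdf_distribution "distr M borel Y"
    unfolding cdf_distribution_def by simp
  have "cdf (distr M borel Y) x = prob {\<omega>\<in>space M. Y \<omega> \<le> x}" for x
    by (simp add: cdf_def measure_distr vimage_def Int_def conj_commute)
  then show ?thesis
    using Y.pseudoinverse[of p x] assms by (simp add: VaR_def)
qed

lemma (in prob_space) VaR_nonneg:
  assumes "Y \<in> borel_measurable M" "AE \<omega> in M. 0 \<le> Y \<omega>" and p: "0 < p" "p < 1"
  shows "0 \<le> VaR M p Y"
proof (rule ccontr)
  assume neg: "\<not> 0 \<le> VaR M p Y"
  have "p \<le> prob {\<omega>\<in>space M. Y \<omega> \<le> VaR M p Y}"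
    using VaR_le_iff[OF assms(1) p, THEN iffD1, OF order_refl] .
  also have "\<dots> = 0"
    using assms(2) neg by (intro prob_eq_0_AE) (auto elim: eventually_mono)
  finally show False
    using p by simp
qed

lemma (in prob_space) integral_mult_indicator_diff:
  fixes W :: "'a \<Rightarrow> real" and c :: real
  assumes "integrable M W" "A \<in> sets M" "B \<in> sets M"
  shows "(\<integral>\<omega>. W \<omega> * indicator B \<omega> \<partial>M) - (\<integral>\<omega>. W \<omega> * indicator A \<omega> \<partial>M)
    = (\<integral>\<omega>. (W \<omega> - c) * (indicator B \<omega> - indicator A \<omega>) \<partial>M) + c * (prob B - prob A)"
proof -
  have [simp]: "integrable M (\<lambda>\<omega>. W \<omega> * indicator S \<omega>)" "integrable M (indicator S :: 'a \<Rightarrow> real)"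
    if "S \<in> sets M" for S
    using that assms(1)
    by (auto intro: integrable_real_mult_indicator simp: emeasure_eq_measure)
  have "(\<lambda>\<omega>. (W \<omega> - c) * (indicator B \<omega> - indicator A \<omega>)) =
      (\<lambda>\<omega>. (W \<omega> * indicator B \<omega> - W \<omega> * indicator A \<omega>) - (c * indicator B \<omega> - c * indicator A \<omega>))"
    by (auto simp: algebra_simps)
  then show ?thesis
    using assms by (simp add: right_diff_distrib)
qed

lemma (in prob_space) sublevel_set_minimizes_integral:
  fixes W :: "'a \<Rightarrow> real" and c :: real
  defines "A \<equiv> {\<omega>\<in>space M. W \<omega> \<le> c}"
  assumes "integrable M W" "B \<in> sets M" "0 \<le> c" "prob A \<le> prob B"
  shows "(\<integral>\<omega>. W \<omega> * indicator A \<omega> \<partial>M) \<le> (\<integral>\<omega>. W \<omega> * indicator B \<omega> \<partial>M)"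
proof -
  have [measurable]: "W \<in> borel_measurable M"
    using assms(2) by (rule borel_measurable_integrable)
  have "0 \<le> (\<integral>\<omega>. (W \<omega> - c) * (indicator B \<omega> - indicator A \<omega>) \<partial>M)"
    by (intro integral_nonneg_AE AE_I2) (auto simp: A_def indicator_def)
  moreover have "0 \<le> c * (prob B - prob A)"
    using assms(4,5) by simp
  ultimately show ?thesis
    using integral_mult_indicator_diff[OF assms(2) _ assms(3), of A c] by (simp add: A_def)
qed

lemma (in prob_space) sublevel_set_minimizer_unique:
  fixes W :: "'a \<Rightarrow> real" and c :: real
  defines "A \<equiv> {\<omega>\<in>space M. W \<omega> \<le> c}"
  assumes "integrable M W" "B \<in> sets M" "0 \<le> c" "prob A \<le> prob B"
    and "(\<integral>\<omega>. W \<omega> * indicator B \<omega> \<partial>M) \<le> (\<integral>\<omega>. W \<omega> * indicator A \<omega> \<partial>M)"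
  shows "AE \<omega> in M. W \<omega> * indicator B \<omega> = W \<omega> * indicator A \<omega>"
proof -
  have [measurable]: "W \<in> borel_measurable M"
    using assms(2) by (rule borel_measurable_integrable)
  have A_sets: "A \<in> sets M"
    unfolding A_def by measurable
  define D where "D = (\<lambda>\<omega>. (W \<omega> - c) * (indicator B \<omega> - indicator A \<omega>))"
  have D_nonneg: "AE \<omega> in M. 0 \<le> D \<omega>"
    by (intro AE_I2) (auto simp: D_def A_def indicator_def)
  have integrable_D: "integrable M D"
    unfolding D_def right_diff_distrib using assms(2,3) A_sets
    by (intro Bochner_Integration.integrable_diff integrable_real_mult_indicator) auto
  have "0 \<le> integral\<^sup>L M D" "0 \<le> c * (prob B - prob A)"
    using D_nonneg assms(4,5) by (auto intro: integral_nonneg_AE)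
  with integral_mult_indicator_diff[OF assms(2) A_sets assms(3), of c] assms(6)
  have "integral\<^sup>L M D = 0" and c_zero_or_eq: "c * (prob B - prob A) = 0"
    unfolding D_def by linarith+
  then have D_zero: "AE \<omega> in M. D \<omega> = 0"
    using integral_eq_mono_AE_eq_AE[of "\<lambda>_. 0" D] D_nonneg integrable_D by auto
  show ?thesis
  proof (cases "c = 0")
    case True
    from D_zero show ?thesis
      by eventually_elim (simp add: D_def True algebra_simps)
  next
    case False
    with c_zero_or_eq have "prob B = prob A"
      by simp
    moreover have "AE \<omega> in M. indicator B \<omega> \<le> (indicator A \<omega> :: real)"
      using D_zero AE_space by eventually_elim (use False assms(4) in \<open>auto simp: D_def A_def indicator_def\<close>)
    ultimately have "AE \<omega> in M. indicator B \<omega> = (indicator A \<omega> :: real)"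
      using assms(3) A_sets
      by (intro integral_eq_mono_AE_eq_AE) (auto simp: emeasure_eq_measure)
    then show ?thesis
      by eventually_elim simp
  qed
qed

locale VaR_minimization = prob_space M for M :: "'a measure" +
  fixes X :: "'a \<Rightarrow> real" and \<gamma> :: "real \<Rightarrow> real" and p x0 :: real
  assumes p_pos: "0 < p" and p_less_1: "p < 1"
    and X_measurable [measurable]: "X \<in> borel_measurable M"
    and X_nonneg: "\<And>\<omega>. \<omega> \<in> space M \<Longrightarrow> 0 \<le> X \<omega>"
    and \<gamma>_measurable [measurable]: "\<gamma> \<in> borel_measurable borel"
    and \<gamma>_pos: "\<And>x. 0 < \<gamma> x"
    and integrable_\<gamma>: "integrable M (\<lambda>\<omega>. \<gamma> (X \<omega>))"
    and integral_\<gamma>: "(\<integral>\<omega>. \<gamma> (X \<omega>) \<partial>M) = 1"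
    and integrable_\<gamma>X: "integrable M (\<lambda>\<omega>. \<gamma> (X \<omega>) * X \<omega>)"
    and x0_less: "x0 < (\<integral>\<omega>. \<gamma> (X \<omega>) * X \<omega> \<partial>M)"
begin

abbreviation price :: "(real \<Rightarrow> real) \<Rightarrow> real" where
  "price g \<equiv> \<integral>\<omega>. \<gamma> (X \<omega>) * g (X \<omega>) \<partial>M"

lemma integrable_price:
  assumes [measurable]: "g \<in> borel_measurable borel"
    and bounds: "AE \<omega> in M. 0 \<le> g (X \<omega>) \<and> g (X \<omega>) \<le> X \<omega>"
  shows "integrable M (\<lambda>\<omega>. \<gamma> (X \<omega>) * g (X \<omega>))"
proof (rule Bochner_Integration.integrable_bound[OF integrable_\<gamma>X])
  show "AE \<omega> in M. norm (\<gamma> (X \<omega>) * g (X \<omega>)) \<le> norm (\<gamma> (X \<omega>) * X \<omega>)"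
    using bounds by eventually_elim (use \<gamma>_pos in \<open>auto simp: abs_mult intro!: mult_left_mono\<close>)
qed measurable

lemma admissible_measurable:
  "g \<in> G_ns M X \<gamma> x0 \<Longrightarrow> (\<lambda>\<omega>. g (X \<omega>)) \<in> borel_measurable M"
  by (auto simp: G_ns_def intro: measurable_compose[OF X_measurable])

lemma admissible_bounds_AE:
  "g \<in> G_ns M X \<gamma> x0 \<Longrightarrow> AE \<omega> in M. 0 \<le> g (X \<omega>) \<and> g (X \<omega>) \<le> X \<omega>"
  by (simp add: G_ns_def)

lemma VaR_admissible_nonneg:
  assumes "g \<in> G_ns M X \<gamma> x0"
  shows "0 \<le> VaR M p (\<lambda>\<omega>. g (X \<omega>))"
  using admissible_bounds_AE[OF assms]
  by (intro VaR_nonneg p_pos p_less_1 admissible_measurable[OF assms]) (auto elim: eventually_mono)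

lemma id_admissible: "(\<lambda>x. x) \<in> G_ns M X \<gamma> x0"
  using x0_less X_nonneg by (auto simp: G_ns_def)

lemma VaR_comp_le_iff:
  "g \<in> borel_measurable borel \<Longrightarrow>
    VaR M p (\<lambda>\<omega>. g (X \<omega>)) \<le> t \<longleftrightarrow> p \<le> prob {\<omega>\<in>space M. g (X \<omega>) \<le> t}"
  by (intro VaR_le_iff p_pos p_less_1 measurable_compose[OF X_measurable])

end

locale VaR_minimization_at_level = VaR_minimization +
  fixes q c :: real
  assumes q_def: "q = Inf ((\<lambda>g. VaR M p (\<lambda>\<omega>. g (X \<omega>))) ` G_ns M X \<gamma> x0)"
    and q_pos: "0 < q"
    and prob_level: "prob {\<omega>\<in>space M. (X \<omega> - q) * \<gamma> (X \<omega>) \<le> c} = p"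
begin

definition capped :: "real \<Rightarrow> real \<Rightarrow> real" where
  "capped t x = (if (x - q) * \<gamma> x > c then x else min x t)"

lemma capped_measurable [measurable]: "capped t \<in> borel_measurable borel"
  unfolding capped_def by measurable

lemma capped_bounds:
  "0 \<le> t \<Longrightarrow> \<omega> \<in> space M \<Longrightarrow> 0 \<le> capped t (X \<omega>) \<and> capped t (X \<omega>) \<le> X \<omega>"
  using X_nonneg by (auto simp: capped_def)

lemma capped_admissible_iff:
  "0 \<le> t \<Longrightarrow> capped t \<in> G_ns M X \<gamma> x0 \<longleftrightarrow> x0 \<le> price (capped t)"
  using capped_bounds by (auto simp: G_ns_def)

lemma VaR_capped_le: "0 \<le> t \<Longrightarrow> VaR M p (\<lambda>\<omega>. capped t (X \<omega>)) \<le> t"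
proof -
  assume "0 \<le> t"
  then have "prob {\<omega>\<in>space M. (X \<omega> - q) * \<gamma> (X \<omega>) \<le> c} \<le> prob {\<omega>\<in>space M. capped t (X \<omega>) \<le> t}"
    by (intro finite_measure_mono) (auto simp: capped_def)
  then show ?thesis
    by (simp add: VaR_comp_le_iff prob_level)
qed

lemma q_le_VaR: "g \<in> G_ns M X \<gamma> x0 \<Longrightarrow> q \<le> VaR M p (\<lambda>\<omega>. g (X \<omega>))"
  unfolding q_def using VaR_admissible_nonneg by (intro cInf_lower bdd_belowI[of _ 0]) auto

lemma price_capped_le_lower_cap:
  assumes "0 \<le> t" "t \<le> q"
  shows "price (capped q) \<le> price (capped t) + (q - t)"
proof -
  have "price (capped q) \<le> (\<integral>\<omega>. \<gamma> (X \<omega>) * capped t (X \<omega>) + (q - t) * \<gamma> (X \<omega>) \<partial>M)"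
  proof (intro integral_mono)
    fix \<omega>
    have "capped q (X \<omega>) \<le> capped t (X \<omega>) + (q - t)"
      using assms by (auto simp: capped_def)
    then have "\<gamma> (X \<omega>) * capped q (X \<omega>) \<le> \<gamma> (X \<omega>) * (capped t (X \<omega>) + (q - t))"
      using \<gamma>_pos[of "X \<omega>"] by (intro mult_left_mono) auto
    then show "\<gamma> (X \<omega>) * capped q (X \<omega>) \<le> \<gamma> (X \<omega>) * capped t (X \<omega>) + (q - t) * \<gamma> (X \<omega>)"
      by (simp add: algebra_simps)
  qed (use assms q_pos capped_bounds integrable_\<gamma> in \<open>auto intro!: integrable_price\<close>)
  also have "\<dots> = price (capped t) + (q - t)"
    using assms capped_bounds integrable_\<gamma> by (simp add: integral_\<gamma> integrable_price)
  finally show ?thesis .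
qed

lemma price_capped_le_x0: "price (capped q) \<le> x0"
proof (rule ccontr)
  assume "\<not> price (capped q) \<le> x0"
  define t where "t = q - min q (price (capped q) - x0) / 2"
  have t: "0 \<le> t" "t < q" "price (capped q) - (q - t) > x0"
    using q_pos \<open>\<not> price (capped q) \<le> x0\<close> by (auto simp: t_def min_def field_simps)
  then have "capped t \<in> G_ns M X \<gamma> x0"
    using price_capped_le_lower_cap[of t] by (simp add: capped_admissible_iff)
  then have "q \<le> t"
    using q_le_VaR VaR_capped_le[OF \<open>0 \<le> t\<close>] by fastforce
  with \<open>t < q\<close> show False
    by simp
qed

lemma level_nonneg: "0 \<le> c"
proof (rule ccontr)
  assume "\<not> 0 \<le> c"
  have "capped q (X \<omega>) = X \<omega>" for \<omega>
  proof (cases "X \<omega> \<le> q")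
    case False
    then have "c < (X \<omega> - q) * \<gamma> (X \<omega>)"
      using \<open>\<not> 0 \<le> c\<close> \<gamma>_pos[of "X \<omega>"] by (smt (verit) mult_pos_pos)
    then show ?thesis
      by (simp add: capped_def)
  qed (simp add: capped_def)
  then have "price (capped q) = price (\<lambda>x. x)"
    by simp
  with price_capped_le_x0 x0_less show False
    by simp
qed

definition excess :: "'a \<Rightarrow> real" where
  "excess \<omega> = \<gamma> (X \<omega>) * max (X \<omega> - q) 0"

lemma excess_measurable [measurable]: "excess \<in> borel_measurable M"
  unfolding excess_def by measurable

lemma integrable_excess: "integrable M excess"
  using integrable_price[of "\<lambda>x. max (x - q) 0"] X_nonneg q_pos by (simp add: excess_def[abs_def])

lemma level_set_eq_excess_sublevel:
  "{\<omega>\<in>space M. (X \<omega> - q) * \<gamma> (X \<omega>) \<le> c} = {\<omega>\<in>space M. excess \<omega> \<le> c}"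
proof -
  have "(X \<omega> - q) * \<gamma> (X \<omega>) \<le> c \<longleftrightarrow> excess \<omega> \<le> c" for \<omega>
  proof (cases "X \<omega> \<le> q")
    case True
    then have "(X \<omega> - q) * \<gamma> (X \<omega>) \<le> 0"
      using \<gamma>_pos[of "X \<omega>"] by (simp add: mult_nonpos_nonneg)
    with True level_nonneg show ?thesis
      by (simp add: excess_def max_def)
  qed (simp add: excess_def max_def mult.commute)
  then show ?thesis
    by blast
qed

lemma \<gamma>_capped_eq:
  "\<gamma> (X \<omega>) * capped q (X \<omega>) =
    \<gamma> (X \<omega>) * X \<omega> - excess \<omega> * indicator {\<omega>\<in>space M. excess \<omega> \<le> c} \<omega>"
  if "\<omega> \<in> space M"
  using that level_set_eq_excess_sublevel
  by (auto simp: capped_def excess_def indicator_def max_def min_def algebra_simps)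

lemma prob_excess_sublevel: "prob {\<omega>\<in>space M. excess \<omega> \<le> c} = p"
  using prob_level level_set_eq_excess_sublevel by simp

lemma price_capped_eq:
  "price (capped q) = price (\<lambda>x. x) - (\<integral>\<omega>. excess \<omega> * indicator {\<omega>\<in>space M. excess \<omega> \<le> c} \<omega> \<partial>M)"
proof -
  have "price (capped q) =
      (\<integral>\<omega>. \<gamma> (X \<omega>) * X \<omega> - excess \<omega> * indicator {\<omega>\<in>space M. excess \<omega> \<le> c} \<omega> \<partial>M)"
    by (intro Bochner_Integration.integral_cong) (simp_all add: \<gamma>_capped_eq)
  also have "\<dots> = price (\<lambda>x. x) - (\<integral>\<omega>. excess \<omega> * indicator {\<omega>\<in>space M. excess \<omega> \<le> c} \<omega> \<partial>M)"
    using integrable_\<gamma>X integrable_excess by (simp add: integrable_real_mult_indicator)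
  finally show ?thesis .
qed

lemma \<gamma>_admissible_le_AE:
  assumes "g \<in> G_ns M X \<gamma> x0" "q \<le> t"
  shows "AE \<omega> in M. \<gamma> (X \<omega>) * g (X \<omega>) \<le>
    \<gamma> (X \<omega>) * X \<omega> - excess \<omega> * indicator {\<omega>\<in>space M. g (X \<omega>) \<le> t} \<omega> + (t - q) * \<gamma> (X \<omega>)"
  using admissible_bounds_AE[OF assms(1)] AE_space
proof eventually_elim
  case (elim \<omega>)
  then have "g (X \<omega>) \<le> X \<omega> - max (X \<omega> - q) 0 * indicator {\<omega>\<in>space M. g (X \<omega>) \<le> t} \<omega> + (t - q)"
    using assms(2) by (auto simp: indicator_def max_def)
  then have "\<gamma> (X \<omega>) * g (X \<omega>) \<le>
      \<gamma> (X \<omega>) * (X \<omega> - max (X \<omega> - q) 0 * indicator {\<omega>\<in>space M. g (X \<omega>) \<le> t} \<omega> + (t - q))"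
    using \<gamma>_pos[of "X \<omega>"] by (intro mult_left_mono) auto
  then show ?case
    by (simp add: excess_def algebra_simps)
qed

lemma price_admissible_le:
  assumes g: "g \<in> G_ns M X \<gamma> x0" and "q \<le> t"
  shows "price g \<le>
    price (\<lambda>x. x) - (\<integral>\<omega>. excess \<omega> * indicator {\<omega>\<in>space M. g (X \<omega>) \<le> t} \<omega> \<partial>M) + (t - q)"
proof -
  let ?B = "{\<omega>\<in>space M. g (X \<omega>) \<le> t}"
  have "?B \<in> sets M"
    using admissible_measurable[OF g] by measurable
  then have integrable_B: "integrable M (\<lambda>\<omega>. excess \<omega> * indicator ?B \<omega>)"
    using integrable_excess by (rule integrable_real_mult_indicator)
  have "price g \<le> (\<integral>\<omega>. \<gamma> (X \<omega>) * X \<omega> - excess \<omega> * indicator ?B \<omega> + (t - q) * \<gamma> (X \<omega>) \<partial>M)"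
    using g integrable_B integrable_\<gamma>X integrable_\<gamma>
    by (intro integral_mono_AE \<gamma>_admissible_le_AE assms(2)) (auto simp: G_ns_def intro: integrable_price)
  also have "\<dots> = price (\<lambda>x. x) - (\<integral>\<omega>. excess \<omega> * indicator ?B \<omega> \<partial>M) + (t - q)"
    using integrable_B integrable_\<gamma>X integrable_\<gamma> by (simp add: integral_\<gamma>)
  finally show ?thesis .
qed

lemma price_admissible_le_capped:
  assumes g: "g \<in> G_ns M X \<gamma> x0" and "q \<le> t" and "p \<le> prob {\<omega>\<in>space M. g (X \<omega>) \<le> t}"
  shows "price g \<le> price (capped q) + (t - q)"
proof -
  let ?B = "{\<omega>\<in>space M. g (X \<omega>) \<le> t}"
  have B: "?B \<in> sets M"
    using admissible_measurable[OF g] by measurable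
  have "price g \<le> price (\<lambda>x. x) - (\<integral>\<omega>. excess \<omega> * indicator ?B \<omega> \<partial>M) + (t - q)"
    using g assms(2) by (rule price_admissible_le)
  also have "\<dots> \<le> price (\<lambda>x. x) - (\<integral>\<omega>. excess \<omega> * indicator {\<omega>\<in>space M. excess \<omega> \<le> c} \<omega> \<partial>M) + (t - q)"
    using sublevel_set_minimizes_integral[OF integrable_excess B level_nonneg] prob_excess_sublevel assms(3)
    by simp
  also have "\<dots> = price (capped q) + (t - q)"
    by (simp add: price_capped_eq)
  finally show ?thesis .
qed

lemma x0_le_price_capped: "x0 \<le> price (capped q)"
proof -
  have "x0 - price (capped q) + q \<le> VaR M p (\<lambda>\<omega>. g (X \<omega>))" if g: "g \<in> G_ns M X \<gamma> x0" for g
  proof -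
    have "x0 \<le> price g"
      using g by (simp add: G_ns_def)
    also have "\<dots> \<le> price (capped q) + (VaR M p (\<lambda>\<omega>. g (X \<omega>)) - q)"
      using g q_le_VaR[OF g] by (intro price_admissible_le_capped) (auto simp: G_ns_def VaR_comp_le_iff[symmetric])
    finally show ?thesis
      by simp
  qed
  then have "x0 - price (capped q) + q \<le> q"
    unfolding q_def using id_admissible by (intro cInf_greatest) auto
  then show ?thesis
    by simp
qed

lemma capped_admissible: "capped q \<in> G_ns M X \<gamma> x0"
  using x0_le_price_capped q_pos by (simp add: capped_admissible_iff)

lemma VaR_capped_minimal:
  "g \<in> G_ns M X \<gamma> x0 \<Longrightarrow> VaR M p (\<lambda>\<omega>. capped q (X \<omega>)) \<le> VaR M p (\<lambda>\<omega>. g (X \<omega>))"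
  using VaR_capped_le[of q] q_pos q_le_VaR by fastforce

lemma capped_unique_AE:
  assumes g: "g \<in> G_ns M X \<gamma> x0"
    and le: "VaR M p (\<lambda>\<omega>. g (X \<omega>)) \<le> VaR M p (\<lambda>\<omega>. capped q (X \<omega>))"
  shows "AE \<omega> in M. g (X \<omega>) = capped q (X \<omega>)"
proof -
  let ?A = "{\<omega>\<in>space M. excess \<omega> \<le> c}" and ?B = "{\<omega>\<in>space M. g (X \<omega>) \<le> q}"
  have B: "?B \<in> sets M"
    using admissible_measurable[OF g] by measurable
  have prob_B: "prob ?A \<le> prob ?B"
    using le VaR_capped_le[of q] q_pos g
    by (simp add: prob_excess_sublevel VaR_comp_le_iff[symmetric] G_ns_def)
  have "x0 \<le> price g"
    using g by (simp add: G_ns_def)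
  moreover have "price g \<le> price (\<lambda>x. x) - (\<integral>\<omega>. excess \<omega> * indicator ?B \<omega> \<partial>M)"
    using price_admissible_le[OF g order_refl] by simp
  moreover have "(\<integral>\<omega>. excess \<omega> * indicator ?A \<omega> \<partial>M) \<le> (\<integral>\<omega>. excess \<omega> * indicator ?B \<omega> \<partial>M)"
    using sublevel_set_minimizes_integral[OF integrable_excess B level_nonneg prob_B] .
  moreover have "price (\<lambda>x. x) - (\<integral>\<omega>. excess \<omega> * indicator ?A \<omega> \<partial>M) = x0"
    and "price (capped q) = x0"
    using price_capped_eq x0_le_price_capped price_capped_le_x0 by simp_all
  ultimately have B_le_A: "(\<integral>\<omega>. excess \<omega> * indicator ?B \<omega> \<partial>M) \<le> (\<integral>\<omega>. excess \<omega> * indicator ?A \<omega> \<partial>M)"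
    and price_g: "price g = price (capped q)"
    by linarith+
  have "AE \<omega> in M. excess \<omega> * indicator ?B \<omega> = excess \<omega> * indicator ?A \<omega>"
    by (rule sublevel_set_minimizer_unique[OF integrable_excess B level_nonneg prob_B B_le_A])
  then have "AE \<omega> in M. \<gamma> (X \<omega>) * g (X \<omega>) \<le> \<gamma> (X \<omega>) * capped q (X \<omega>)"
    using \<gamma>_admissible_le_AE[OF g order_refl, unfolded diff_self mult_zero_left add_0_right] AE_space
  proof eventually_elim
    case (elim \<omega>)
    then show ?case
      using \<gamma>_capped_eq[OF elim(3)] by linarith
  qed
  then have "AE \<omega> in M. \<gamma> (X \<omega>) * g (X \<omega>) = \<gamma> (X \<omega>) * capped q (X \<omega>)"
    using g price_g capped_admissible
    by (intro integral_eq_mono_AE_eq_AE) (auto simp: G_ns_def intro: integrable_price)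
  then show ?thesis
    by eventually_elim (use \<gamma>_pos in \<open>auto simp: less_le\<close>)
qed

end

theorem corollary1:
  fixes M :: "'a measure" and X :: "'a \<Rightarrow> real" and \<gamma> :: "real \<Rightarrow> real"
    and p x0 q c :: real
  assumes "prob_space M" and "atomless M"
    and "p > 0" and "p < 1"
    and "X \<in> borel_measurable M" and "\<forall>\<omega>\<in>space M. X \<omega> \<ge> 0"
    and "pos_density_on_support M X"
    and "continuous_on UNIV \<gamma>" and "\<forall>x. \<gamma> x > 0"
    and "integrable M (\<lambda>\<omega>. \<gamma> (X \<omega>))" and "(\<integral>\<omega>. \<gamma> (X \<omega>) \<partial>M) = 1"
    and "integrable M (\<lambda>\<omega>. \<gamma> (X \<omega>) * X \<omega>)"
    and "0 \<le> x0" and "x0 < (\<integral>\<omega>. \<gamma> (X \<omega>) * X \<omega> \<partial>M)"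
    and q_def: "q = Inf ((\<lambda>g. VaR M p (\<lambda>\<omega>. g (X \<omega>))) ` G_ns M X \<gamma> x0)"
    and "q > 0"
    and c_def: "c = VaR M p (\<lambda>\<omega>. (X \<omega> - q) * \<gamma> (X \<omega>))"
    and "measure M {\<omega>\<in>space M. (X \<omega> - q) * \<gamma> (X \<omega>) \<le> c} = p"
  shows "let gX = (\<lambda>x. if (x - q) * \<gamma> x > c then x else min x q) in
     gX \<in> G_ns M X \<gamma> x0
     \<and> (\<forall>g\<in>G_ns M X \<gamma> x0. VaR M p (\<lambda>\<omega>. gX (X \<omega>)) \<le> VaR M p (\<lambda>\<omega>. g (X \<omega>)))
     \<and> (\<forall>g\<in>G_ns M X \<gamma> x0. VaR M p (\<lambda>\<omega>. g (X \<omega>)) \<le> VaR M p (\<lambda>\<omega>. gX (X \<omega>))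
          \<longrightarrow> (AE \<omega> in M. g (X \<omega>) = gX (X \<omega>)))"
proof -
  have "\<gamma> \<in> borel_measurable borel"
    using assms(8) by (rule borel_measurable_continuous_onI)
  with assms interpret VaR_minimization_at_level M X \<gamma> p x0 q c
    by (intro VaR_minimization_at_level.intro VaR_minimization.intro VaR_minimization_axioms.intro
        VaR_minimization_at_level_axioms.intro) simp_all
  have "(\<lambda>x. if (x - q) * \<gamma> x > c then x else min x q) = capped q"
    by (simp add: fun_eq_iff capped_def)
  then show ?thesis
    using capped_admissible VaR_capped_minimal capped_unique_AE by (simp only: Let_def) blast
qed

end
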